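(* Consider the GIP model with threshold-type bounds with uniform thresholds $\theta_l,\theta_h$ and $l_{j,0}=1$ for all $v_j\in V$, where $\theta_l>0$, and $h_{j,0}\ge 1$ and $\theta_h h_{j,0}>\theta_l$ for every $j$. Consider the MLT model on the same network with parameters $l'_j=\theta_l\alpha$, $h'_j=\theta_h\alpha h_{j,0}$, $m_j=\theta_h h_{j,0}/\theta_l$ (so $h'_{j,0}=h_{j,0}$). Let $\mathbf x(0)$ be an admissible GIP initial state and let the MLT model start from $\mathbf x'(0)=\mathbf x(0)$. Then $$x_j(t)=(\theta_l\alpha)^t\,x'_j(t)\qquad\text{for all }t\ge 0,\ v_j\in V.$$ Consequently, for $\gamma\in[0,1)$ and $\gamma'=1-(1-\gamma)\theta_l\alpha$, one has $(1-\gamma)^t x_j(t)=(1-\gamma')^t x'_j(t)$ for every $t\ge0$ and $j$, so that the overall influences $\sum_{t\ge1}(1-\gamma)^t x_j(t)$ and $\sum_{t\ge1}(1-\gamma')^t x'_j(t)$ coincide (whenever either converges).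
   Context: Let $G=(V,E)$ be a directed weighted network with node set $V=\{v_1,\dots,v_n\}$ and weighted adjacency matrix $\mathbf W=(W_{ij})$, where $W_{ij}>0$ if $(v_i,v_j)\in E$ and $W_{ij}=0$ otherwise; let $\alpha=\sum_{(v_i,v_j)\in E}W_{ij}/|E|$ be the mean edge weight. The general information propagation (GIP) model with lower bounds $\{l_{j,t}\}$ and upper bounds $\{h_{j,t}\}$ (real numbers with $0\le l_{j,t}\le h_{j,t}$, $l_{j,0}>0$) is the dynamics $x_j(t)=f_{j,t}(\sum_i W_{ij}x_i(t-1))$ for $t>0$, where $f_{j,t}(x)=0$ if $x<l_{j,t}$, $f_{j,t}(x)=x$ if $l_{j,t}\le x<h_{j,t}$, $f_{j,t}(x)=h_{j,t}$ if $x\ge h_{j,t}$; an initial state is admissible if $x_j(0)\in\{0\}\cup[l_{j,0},h_{j,0}]$ for all $j$. Threshold-type bounds with uniform thresholds $\theta_l,\theta_h$ are: for all $t>0$, $v_j\in V$, $l_{j,t}=(\theta_l\alpha)^t l_{j,0}$ and $h_{j,t}=\theta_h\theta_l^{t-1}\alpha^t h_{j,0}$. The multi-valued linear threshold (MLT) model with parameters $l'_j<h'_j$, $m_j$ is the dynamics $x'_j(t)=g_j(\sum_i W_{ij}x'_i(t-1))$ for $t>0$, where $g_j(y)=0$ if $y<l'_j$, $g_j(y)=\frac{m_j-1}{h'_j-l'_j}(y-l'_j)+1$ if $l'_j\le y<h'_j$, and $g_j(y)=m_j$ if $y\ge h'_j$, with initial values $x'_j(0)\in\{0\}\cup[1,h'_{j,0}]$.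 *)

theory Defs
  imports Complex_Main
begin

definition edges :: "nat \<Rightarrow> (nat \<Rightarrow> nat \<Rightarrow> real) \<Rightarrow> (nat \<times> nat) set" where
  "edges n W = {(i, j). i < n \<and> j < n \<and> W i j > 0}"

definition mean_weight :: "nat \<Rightarrow> (nat \<Rightarrow> nat \<Rightarrow> real) \<Rightarrow> real" where
  "mean_weight n W = (\<Sum>(i, j)\<in>edges n W. W i j) / real (card (edges n W))"

definition gip_f :: "real \<Rightarrow> real \<Rightarrow> real \<Rightarrow> real" where
  "gip_f l h x = (if x < l then 0 else if x < h then x else h)"

definition gip_dynamics ::
  "nat \<Rightarrow> (nat \<Rightarrow> nat \<Rightarrow> real) \<Rightarrow> (nat \<Rightarrow> nat \<Rightarrow> real) \<Rightarrow> (nat \<Rightarrow> nat \<Rightarrow> real)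
   \<Rightarrow> (nat \<Rightarrow> nat \<Rightarrow> real) \<Rightarrow> bool" where
  "gip_dynamics n W l h x \<longleftrightarrow>
     (\<forall>t j. j < n \<longrightarrow> x (Suc t) j = gip_f (l j (Suc t)) (h j (Suc t)) (\<Sum>i<n. W i j * x t i))"

definition gip_admissible ::
  "nat \<Rightarrow> (nat \<Rightarrow> nat \<Rightarrow> real) \<Rightarrow> (nat \<Rightarrow> nat \<Rightarrow> real) \<Rightarrow> (nat \<Rightarrow> real) \<Rightarrow> bool" where
  "gip_admissible n l h x0 \<longleftrightarrow> (\<forall>j<n. x0 j = 0 \<or> (l j 0 \<le> x0 j \<and> x0 j \<le> h j 0))"

definition threshold_l :: "real \<Rightarrow> real \<Rightarrow> (nat \<Rightarrow> real) \<Rightarrow> nat \<Rightarrow> nat \<Rightarrow> real" where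
  "threshold_l \<theta>l \<alpha> l0 j t = (if t = 0 then l0 j else (\<theta>l * \<alpha>) ^ t * l0 j)"

definition threshold_h :: "real \<Rightarrow> real \<Rightarrow> real \<Rightarrow> (nat \<Rightarrow> real) \<Rightarrow> nat \<Rightarrow> nat \<Rightarrow> real" where
  "threshold_h \<theta>h \<theta>l \<alpha> h0 j t = (if t = 0 then h0 j else \<theta>h * \<theta>l ^ (t - 1) * \<alpha> ^ t * h0 j)"

definition mlt_g :: "real \<Rightarrow> real \<Rightarrow> real \<Rightarrow> real \<Rightarrow> real" where
  "mlt_g l' h' m y = (if y < l' then 0 else if y < h' then (m - 1) / (h' - l') * (y - l') + 1 else m)"

definition mlt_dynamics ::
  "nat \<Rightarrow> (nat \<Rightarrow> nat \<Rightarrow> real) \<Rightarrow> (nat \<Rightarrow> real) \<Rightarrow> (nat \<Rightarrow> real) \<Rightarrow> (nat \<Rightarrow> real)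
   \<Rightarrow> (nat \<Rightarrow> nat \<Rightarrow> real) \<Rightarrow> bool" where
  "mlt_dynamics n W l' h' m x' \<longleftrightarrow>
     (\<forall>t j. j < n \<longrightarrow> x' (Suc t) j = mlt_g (l' j) (h' j) (m j) (\<Sum>i<n. W i j * x' t i))"

end

theory Submission
  imports Defs
begin

text \<open>With \<open>c = \<theta>l \<alpha>\<close>, both GIP bounds at time \<open>t + 1\<close> are \<open>c\<^sup>t\<close> times the bounds
  \<open>c\<close> and \<open>c M\<close> (\<open>M = \<theta>h h0 j / \<theta>l\<close>) of time 1. Since the clipping function \<open>gip_f\<close> is
  positively homogeneous, an induction on \<open>t\<close> shows that the GIP state at time \<open>t\<close> is the
  \<open>c\<^sup>t\<close>-rescaling of the trajectory governed by \<open>gip_f c (c M)\<close>, and that map is exactly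
  \<open>c\<close> times the MLT activation with \<open>m = M\<close>. The discounted statements follow because
  \<open>(1 - \<gamma>) c = 1 - \<gamma>'\<close>. Admissibility of the initial state, \<open>h0 j \<ge> 1\<close> and the range of
  \<open>\<gamma>\<close> are not needed; the case \<open>\<alpha> = 0\<close> is degenerate (both bounds vanish, so GIP dies out).\<close>

lemma gip_f_scale:
  fixes k l h y :: real
  assumes "k > 0"
  shows "gip_f (k * l) (k * h) (k * y) = k * gip_f l h y"
  using assms by (simp add: gip_f_def)

lemma gip_f_eq_mlt_g:
  fixes c M y :: real
  assumes "c \<noteq> 0" and "M \<noteq> 1"
  shows "gip_f c (c * M) y = c * mlt_g c (c * M) M y"
proof -
  have "(M - 1) / (c * M - c) * (y - c) + 1 = y / c"
    using assms by (simp add: field_simps)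
  then show ?thesis
    using assms by (simp add: gip_f_def mlt_g_def)
qed

lemma mean_weight_nonneg:
  assumes "\<And>i j. i < n \<Longrightarrow> j < n \<Longrightarrow> W i j \<ge> 0"
  shows "mean_weight n W \<ge> 0"
  unfolding mean_weight_def
  by (intro divide_nonneg_nonneg sum_nonneg) (auto simp: edges_def)

lemma threshold_l_Suc_unit:
  "threshold_l \<theta>l \<alpha> (\<lambda>_. 1) j (Suc t) = (\<theta>l * \<alpha>) ^ t * (\<theta>l * \<alpha>)"
  by (simp add: threshold_l_def)

lemma threshold_h_Suc:
  fixes \<theta>l :: real
  assumes "\<theta>l \<noteq> 0"
  shows "threshold_h \<theta>h \<theta>l \<alpha> h0 j (Suc t)
           = (\<theta>l * \<alpha>) ^ t * ((\<theta>l * \<alpha>) * (\<theta>h * h0 j / \<theta>l))"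
  using assms by (simp add: threshold_h_def power_mult_distrib field_simps)

lemma gip_threshold_eq_scaled_mlt:
  fixes \<theta>l \<theta>h \<alpha> :: real
  assumes \<theta>l_pos: "\<theta>l > 0" and \<alpha>_nonneg: "\<alpha> \<ge> 0"
    and h0_gt: "\<And>j. j < n \<Longrightarrow> \<theta>h * h0 j > \<theta>l"
    and gip: "gip_dynamics n W (threshold_l \<theta>l \<alpha> (\<lambda>_. 1)) (threshold_h \<theta>h \<theta>l \<alpha> h0) x"
    and mlt: "mlt_dynamics n W (\<lambda>_. \<theta>l * \<alpha>) (\<lambda>j. \<theta>h * \<alpha> * h0 j) (\<lambda>j. \<theta>h * h0 j / \<theta>l) x'"
    and init: "\<And>j. j < n \<Longrightarrow> x' 0 j = x 0 j"
    and "j < n"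
  shows "x t j = (\<theta>l * \<alpha>) ^ t * x' t j"
  using \<open>j < n\<close>
proof (induction t arbitrary: j)
  case 0
  then show ?case using init by simp
next
  case (Suc t)
  define c where "c = \<theta>l * \<alpha>"
  define M where "M = \<theta>h * h0 j / \<theta>l"
  define S where "S = (\<Sum>i<n. W i j * x' t i)"
  have "(\<Sum>i<n. W i j * x t i) = c ^ t * S"
    unfolding S_def c_def sum_distrib_left using Suc.IH by (intro sum.cong) auto
  then have gip_step: "x (Suc t) j = gip_f (c ^ t * c) (c ^ t * (c * M)) (c ^ t * S)"
    using gip Suc.prems \<theta>l_pos
    by (simp add: gip_dynamics_def threshold_l_Suc_unit threshold_h_Suc c_def M_def)
  have "\<theta>h * \<alpha> * h0 j = c * M"
    using \<theta>l_pos by (simp add: c_def M_def)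
  then have mlt_step: "x' (Suc t) j = mlt_g c (c * M) M S"
    using mlt Suc.prems by (simp add: mlt_dynamics_def S_def c_def M_def)
  have "x (Suc t) j = c ^ Suc t * x' (Suc t) j"
  proof (cases "c = 0")
    case True
    then show ?thesis using gip_step by (simp add: gip_f_def)
  next
    case False
    then have "c ^ t > 0"
      using \<theta>l_pos \<alpha>_nonneg by (simp add: c_def)
    moreover have "M \<noteq> 1"
      using h0_gt[OF Suc.prems] \<theta>l_pos by (simp add: M_def field_simps)
    ultimately show ?thesis
      using gip_step mlt_step False by (simp add: gip_f_scale gip_f_eq_mlt_g)
  qed
  then show ?case by (simp add: c_def)
qed

theorem theorem2:
  fixes n :: nat and W :: "nat \<Rightarrow> nat \<Rightarrow> real"
    and \<theta>l \<theta>h :: real and h0 :: "nat \<Rightarrow> real"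
    and x x' :: "nat \<Rightarrow> nat \<Rightarrow> real" and \<gamma> :: real
  defines "\<alpha> \<equiv> mean_weight n W"
  defines "\<gamma>' \<equiv> 1 - (1 - \<gamma>) * \<theta>l * \<alpha>"
  assumes W_nonneg: "\<And>i j. i < n \<Longrightarrow> j < n \<Longrightarrow> W i j \<ge> 0"
    and \<theta>l_pos: "\<theta>l > 0"
    and h0_ge: "\<And>j. j < n \<Longrightarrow> h0 j \<ge> 1"
    and h0_gt: "\<And>j. j < n \<Longrightarrow> \<theta>h * h0 j > \<theta>l"
    and gip: "gip_dynamics n W (threshold_l \<theta>l \<alpha> (\<lambda>_. 1)) (threshold_h \<theta>h \<theta>l \<alpha> h0) x"
    and adm: "gip_admissible n (threshold_l \<theta>l \<alpha> (\<lambda>_. 1)) (threshold_h \<theta>h \<theta>l \<alpha> h0) (x 0)"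
    and mlt: "mlt_dynamics n W (\<lambda>_. \<theta>l * \<alpha>) (\<lambda>j. \<theta>h * \<alpha> * h0 j) (\<lambda>j. \<theta>h * h0 j / \<theta>l) x'"
    and init: "\<And>j. j < n \<Longrightarrow> x' 0 j = x 0 j"
    and \<gamma>_range: "0 \<le> \<gamma>" "\<gamma> < 1"
  shows "(\<forall>t. \<forall>j<n. x t j = (\<theta>l * \<alpha>) ^ t * x' t j)
       \<and> (\<forall>t. \<forall>j<n. (1 - \<gamma>) ^ t * x t j = (1 - \<gamma>') ^ t * x' t j)
       \<and> (\<forall>j<n. \<forall>s. (\<lambda>t. (1 - \<gamma>) ^ Suc t * x (Suc t) j) sums s
                  \<longleftrightarrow> (\<lambda>t. (1 - \<gamma>') ^ Suc t * x' (Suc t) j) sums s)"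
proof -
  have scaled: "x t j = (\<theta>l * \<alpha>) ^ t * x' t j" if "j < n" for t j
    using gip_threshold_eq_scaled_mlt[OF \<theta>l_pos _ h0_gt gip mlt init that]
      mean_weight_nonneg[OF W_nonneg] by (simp add: \<alpha>_def)
  have "1 - \<gamma>' = (1 - \<gamma>) * (\<theta>l * \<alpha>)"
    by (simp add: \<gamma>'_def)
  then have discounted: "(1 - \<gamma>) ^ t * x t j = (1 - \<gamma>') ^ t * x' t j" if "j < n" for t j
    using scaled[OF that] by (simp add: power_mult_distrib)
  have "(\<lambda>t. (1 - \<gamma>) ^ Suc t * x (Suc t) j) = (\<lambda>t. (1 - \<gamma>') ^ Suc t * x' (Suc t) j)"
    if "j < n" for j
    using discounted[OF that, of "Suc _"] by (intro ext) blast
  then show ?thesis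
    using scaled discounted by simp
qed

end
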